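(* Let $G$ be a graph and let $X\subseteq V(G)$. Then $\mathrm{cmp}(G)\le \mathrm{cmp}(G-X)+|X|$.
   Context: All graphs are finite and simple. A forest decomposition of a graph $G$ is a pair $(F,(W_x)_{x\in V(F)})$ where $F$ is a forest and $W_x\subseteq V(G)$, such that (1) for every vertex $u$ of $G$, $\{x\in V(F)\mid u\in W_x\}$ induces a nonempty connected subgraph of $F$, and (2) every edge $uv$ of $G$ has both ends in some bag $W_x$. Its width is the maximum size of a bag minus one. It is suitable if additionally (3) $F$ is a subgraph of $G$ with $V(F)=V(G)$, and (4) $u\in W_u$ for every $u\in V(G)$. The complexity $\mathrm{cmp}(G)$ is the minimum width of a suitable forest decomposition of $G$, with the convention $\mathrm{cmp}(G)=0$ if $G$ has no vertices. *)

theory Defs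
  imports Main
begin

definition graph :: "'a set \<Rightarrow> 'a set set \<Rightarrow> bool" where
  "graph V E \<longleftrightarrow> finite V \<and> (\<forall>e\<in>E. \<exists>u v. u \<noteq> v \<and> u \<in> V \<and> v \<in> V \<and> e = {u, v})"

definition del_vertices_edges :: "'a set set \<Rightarrow> 'a set \<Rightarrow> 'a set set" where
  "del_vertices_edges E X = {e \<in> E. e \<inter> X = {}}"

definition walk_in :: "'b set set \<Rightarrow> 'b set \<Rightarrow> 'b list \<Rightarrow> bool" where
  "walk_in E S xs \<longleftrightarrow> xs \<noteq> [] \<and> set xs \<subseteq> S \<and>
     (\<forall>i. Suc i < length xs \<longrightarrow> {xs ! i, xs ! Suc i} \<in> E)"

definition induces_connected :: "'b set set \<Rightarrow> 'b set \<Rightarrow> bool" where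
  "induces_connected E S \<longleftrightarrow> S \<noteq> {} \<and>
     (\<forall>u\<in>S. \<forall>v\<in>S. \<exists>xs. walk_in E S xs \<and> hd xs = u \<and> last xs = v)"

definition has_cycle :: "'b set \<Rightarrow> 'b set set \<Rightarrow> bool" where
  "has_cycle V E \<longleftrightarrow> (\<exists>xs. length xs \<ge> 3 \<and> distinct xs \<and> walk_in E V xs \<and> {last xs, hd xs} \<in> E)"

definition forest :: "'b set \<Rightarrow> 'b set set \<Rightarrow> bool" where
  "forest V E \<longleftrightarrow> graph V E \<and> \<not> has_cycle V E"

definition forest_decomposition ::
  "'a set \<Rightarrow> 'a set set \<Rightarrow> 'b set \<Rightarrow> 'b set set \<Rightarrow> ('b \<Rightarrow> 'a set) \<Rightarrow> bool" where
  "forest_decomposition V E VF EF W \<longleftrightarrow>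
     forest VF EF \<and> (\<forall>x\<in>VF. W x \<subseteq> V) \<and>
     (\<forall>u\<in>V. induces_connected EF {x \<in> VF. u \<in> W x}) \<and>
     (\<forall>e\<in>E. \<exists>x\<in>VF. e \<subseteq> W x)"

definition suitable_forest_decomposition ::
  "'a set \<Rightarrow> 'a set set \<Rightarrow> 'a set set \<Rightarrow> ('a \<Rightarrow> 'a set) \<Rightarrow> bool" where
  "suitable_forest_decomposition V E EF W \<longleftrightarrow>
     forest_decomposition V E V EF W \<and> EF \<subseteq> E \<and> (\<forall>u\<in>V. u \<in> W u)"

text \<open>Width: maximum bag size minus one (bags are nonempty for suitable decompositions).\<close>
definition width :: "'b set \<Rightarrow> ('b \<Rightarrow> 'a set) \<Rightarrow> nat" where
  "width VF W = Max ((\<lambda>x. card (W x)) ` VF) - 1"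

definition cmp :: "'a set \<Rightarrow> 'a set set \<Rightarrow> nat" where
  "cmp V E = (if V = {} then 0 else
     Min {width V W | EF W. suitable_forest_decomposition V E EF W})"

end

theory Submission
  imports Defs
begin

(* Induction on X reduces the claim to deleting a single vertex x. Take an optimal suitable forest
   decomposition (F', W') of G - x. In every component of F' that contains a neighbour of x, join x
   to one such neighbour: x enters each component once, so no cycle arises, and the new forest is
   still a subgraph of G. Add x to every bag of these components and give x the bag {x}. The vertices
   whose bags contain x are then x and these components, a connected subtree; an edge xy is covered
   by the bag of y; and every bag grows by at most one. *)

section \<open>Walks and reachability\<close>

lemma walk_in_singleton [simp]: "walk_in E S [a] \<longleftrightarrow> a \<in> S"
  by (auto simp: walk_in_def)

lemma walk_in_Cons_Cons:
  "walk_in E S (a # b # xs) \<longleftrightarrow> a \<in> S \<and> {a, b} \<in> E \<and> walk_in E S (b # xs)"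
proof -
  have "(\<forall>i. Suc i < length (a # b # xs) \<longrightarrow> {(a # b # xs) ! i, (a # b # xs) ! Suc i} \<in> E)
    \<longleftrightarrow> {a, b} \<in> E \<and> (\<forall>i. Suc i < length (b # xs) \<longrightarrow> {(b # xs) ! i, (b # xs) ! Suc i} \<in> E)"
    by (auto simp: All_less_Suc2 less_Suc_eq_0_disj)
  then show ?thesis
    unfolding walk_in_def by auto
qed

lemma walk_in_snoc:
  assumes "xs \<noteq> []"
  shows "walk_in E S (xs @ [a]) \<longleftrightarrow> walk_in E S xs \<and> a \<in> S \<and> {last xs, a} \<in> E"
  using assms
proof (induction xs rule: list_nonempty_induct)
  case (single b)
  then show ?case by (auto simp: walk_in_Cons_Cons)
next
  case (cons b xs)
  then obtain c ys where "xs = c # ys" by (cases xs) auto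
  with cons show ?case by (auto simp: walk_in_Cons_Cons)
qed

lemma walk_in_subgraph:
  assumes "walk_in E S xs" and "set xs \<subseteq> S'"
    and "\<And>a b. a \<in> set xs \<Longrightarrow> b \<in> set xs \<Longrightarrow> {a, b} \<in> E \<Longrightarrow> {a, b} \<in> E'"
  shows "walk_in E' S' xs"
  using assms unfolding walk_in_def by (metis Suc_lessD nth_mem)

lemma closed_walk_rotate1:
  assumes "walk_in E S xs" and "{last xs, hd xs} \<in> E" and "length xs \<ge> 2"
  shows "walk_in E S (rotate1 xs) \<and> {last (rotate1 xs), hd (rotate1 xs)} \<in> E"
proof -
  obtain a b ys where xs: "xs = a # b # ys"
    using assms(3) by (metis Suc_le_length_iff numeral_2_eq_2)
  have "walk_in E S (b # ys)" "a \<in> S" "{a, b} \<in> E"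
    using assms(1) by (simp_all add: xs walk_in_Cons_Cons)
  moreover have "{last (b # ys), a} \<in> E"
    using assms(2) by (simp add: xs insert_commute)
  ultimately have "walk_in E S ((b # ys) @ [a])"
    using walk_in_snoc[of "b # ys" E S a] by blast
  then show ?thesis
    using \<open>{a, b} \<in> E\<close> by (simp add: xs insert_commute)
qed

lemma closed_walk_rotate:
  assumes "walk_in E S xs" and "{last xs, hd xs} \<in> E" and "length xs \<ge> 2"
  shows "walk_in E S (rotate n xs) \<and> {last (rotate n xs), hd (rotate n xs)} \<in> E"
proof (induction n)
  case 0
  then show ?case using assms by simp
next
  case (Suc n)
  then show ?case
    using closed_walk_rotate1[of E S "rotate n xs"] assms(3) by (simp add: rotate_Suc)
qed

definition reachable :: "'b set set \<Rightarrow> 'b \<Rightarrow> 'b \<Rightarrow> bool" where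
  "reachable E = (\<lambda>a b. {a, b} \<in> E)\<^sup>*\<^sup>*"

lemma reachable_refl [simp]: "reachable E a a"
  by (simp add: reachable_def)

lemma reachable_edge_step: "reachable E a b \<Longrightarrow> {b, c} \<in> E \<Longrightarrow> reachable E a c"
  unfolding reachable_def by (rule rtranclp.rtrancl_into_rtrancl)

lemma reachable_trans: "reachable E a b \<Longrightarrow> reachable E b c \<Longrightarrow> reachable E a c"
  unfolding reachable_def by (rule rtranclp_trans)

lemma reachable_induct [consumes 1, case_names refl step]:
  assumes "reachable E a b" and "P a"
    and "\<And>y z. reachable E a y \<Longrightarrow> {y, z} \<in> E \<Longrightarrow> P y \<Longrightarrow> P z"
  shows "P b"
  using assms unfolding reachable_def by (induction rule: rtranclp_induct) auto

lemma reachable_sym: "reachable E a b \<Longrightarrow> reachable E b a"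
  unfolding reachable_def
proof (induction rule: rtranclp_induct)
  case (step y z)
  have "{z, y} \<in> E" using step(2) by (simp add: insert_commute)
  then show ?case
    using step(3) by (rule converse_rtranclp_into_rtranclp[of "\<lambda>a b. {a, b} \<in> E"])
qed simp

lemma walk_in_reachable: "walk_in E S xs \<Longrightarrow> reachable E (hd xs) (last xs)"
proof (induction xs rule: induct_list012)
  case (3 a b xs)
  then show ?case
    unfolding walk_in_Cons_Cons reachable_def by (auto intro: converse_rtranclp_into_rtranclp)
qed (simp_all add: walk_in_def)

lemma reachable_walk_in:
  assumes "reachable {e \<in> E. e \<subseteq> S} u v" and "u \<in> S"
  shows "\<exists>xs. walk_in E S xs \<and> hd xs = u \<and> last xs = v"
  using assms unfolding reachable_def
proof (induction rule: converse_rtranclp_induct)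
  case base
  then show ?case by (intro exI[of _ "[v]"]) simp
next
  case (step a b)
  then obtain xs where xs: "walk_in E S xs" "hd xs = b" "last xs = v"
    by auto
  then obtain ys where "xs = b # ys"
    by (cases xs) (auto simp: walk_in_def)
  with xs step show ?case
    by (intro exI[of _ "a # xs"]) (auto simp: walk_in_Cons_Cons)
qed

lemma induces_connectedI:
  assumes "r \<in> S" and "\<And>v. v \<in> S \<Longrightarrow> reachable {e \<in> E. e \<subseteq> S} r v"
  shows "induces_connected E S"
  unfolding induces_connected_def
proof (intro conjI ballI)
  show "S \<noteq> {}" using assms(1) by blast
  fix u v assume "u \<in> S" "v \<in> S"
  then have "reachable {e \<in> E. e \<subseteq> S} u v"
    using assms(2) by (meson reachable_sym reachable_trans)
  then show "\<exists>xs. walk_in E S xs \<and> hd xs = u \<and> last xs = v"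
    using \<open>u \<in> S\<close> by (rule reachable_walk_in)
qed

lemma induces_connected_mono:
  assumes "induces_connected E S" and "E \<subseteq> E'"
  shows "induces_connected E' S"
  using assms unfolding induces_connected_def walk_in_def by blast

section \<open>Graphs and forests\<close>

lemma graph_finite: "graph V E \<Longrightarrow> finite V"
  by (simp add: graph_def)

lemma graph_edge_subset: "graph V E \<Longrightarrow> e \<in> E \<Longrightarrow> e \<subseteq> V"
  unfolding graph_def by auto

lemma graph_edge_at:
  assumes "graph V E" and "e \<in> E" and "x \<in> e"
  obtains y where "y \<in> V" and "y \<noteq> x" and "e = {x, y}"
proof -
  obtain u w where "u \<noteq> w" "u \<in> V" "w \<in> V" "e = {u, w}"
    using assms(1,2) by (auto simp: graph_def)
  with assms(3) show thesis
    by (cases "x = u") (auto simp: insert_commute intro: that)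
qed

lemma reachable_in_graph:
  assumes "graph V E" and "reachable E a b" and "a \<in> V"
  shows "b \<in> V"
  using assms(2,3)
proof (induction rule: reachable_induct)
  case (step y z)
  then show ?case
    using graph_edge_subset[OF assms(1) step(2)] by simp
qed

lemma graph_del_vertices: "graph V E \<Longrightarrow> graph (V - X) (del_vertices_edges E X)"
  unfolding graph_def del_vertices_edges_def by fastforce

lemma del_vertices_edges_empty [simp]: "del_vertices_edges E {} = E"
  by (simp add: del_vertices_edges_def)

lemma del_vertices_edges_twice:
  "del_vertices_edges (del_vertices_edges E X) Y = del_vertices_edges E (X \<union> Y)"
  unfolding del_vertices_edges_def by auto

lemma graph_insert_vertex:
  assumes "graph V F" and "x \<notin> V" and "T \<subseteq> V"
  shows "graph (insert x V) (F \<union> (\<lambda>t. {x, t}) ` T)"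
  unfolding graph_def
proof (intro conjI ballI)
  show "finite (insert x V)"
    using assms(1) by (simp add: graph_finite)
  fix e assume "e \<in> F \<union> (\<lambda>t. {x, t}) ` T"
  then show "\<exists>u v. u \<noteq> v \<and> u \<in> insert x V \<and> v \<in> insert x V \<and> e = {u, v}"
  proof
    assume "e \<in> F"
    then obtain u v where "u \<noteq> v" "u \<in> V" "v \<in> V" "e = {u, v}"
      using assms(1) by (auto simp: graph_def)
    then show ?thesis by blast
  next
    assume "e \<in> (\<lambda>t. {x, t}) ` T"
    then obtain t where "t \<in> T" "e = {x, t}" by blast
    then show ?thesis
      using assms(2,3) by (intro exI[of _ x] exI[of _ t]) auto
  qed
qed

lemma has_cycle_subgraph:
  assumes "length xs \<ge> 3" and "distinct xs" and "walk_in E S xs" and "{last xs, hd xs} \<in> E"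
    and "set xs \<subseteq> S'" and "\<And>a b. a \<in> set xs \<Longrightarrow> b \<in> set xs \<Longrightarrow> {a, b} \<in> E \<Longrightarrow> {a, b} \<in> E'"
  shows "has_cycle S' E'"
proof -
  have "walk_in E' S' xs"
    using assms(3,5,6) by (rule walk_in_subgraph)
  moreover have "{last xs, hd xs} \<in> E'"
    using assms(1,4,6) by (metis hd_in_set last_in_set list.size(3) not_numeral_le_zero)
  ultimately show ?thesis
    using assms(1,2) by (auto simp: has_cycle_def)
qed

lemma cycle_rotate_to_vertex:
  assumes "length xs \<ge> 3" and "distinct xs" and "walk_in E S xs" and "{last xs, hd xs} \<in> E"
    and "x \<in> set xs"
  obtains a ys where "ys \<noteq> []" and "distinct (x # a # ys)" and "{x, a} \<in> E"
    and "walk_in E S (a # ys)" and "{last ys, x} \<in> E"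
proof -
  obtain i where "i < length xs" "xs ! i = x"
    using assms(5) by (meson in_set_conv_nth)
  then have "hd (rotate i xs) = x"
    by (metis hd_rotate_conv_nth list.size(3) mod_less not_less_zero)
  moreover have "length (rotate i xs) \<ge> 3"
    using assms(1) by simp
  ultimately obtain a ys where rot: "rotate i xs = x # a # ys" and "ys \<noteq> []"
    by (cases "rotate i xs" rule: remdups_adj.cases) (auto simp: Suc_le_eq)
  have "walk_in E S (x # a # ys) \<and> {last (x # a # ys), x} \<in> E"
    using closed_walk_rotate[OF assms(3,4), of i] assms(1) by (simp add: rot)
  moreover have "distinct (x # a # ys)"
    using assms(2) by (simp flip: rot)
  ultimately show thesis
    using that \<open>ys \<noteq> []\<close> by (auto simp: walk_in_Cons_Cons)
qed

lemma forest_insert_vertex: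
  assumes F: "forest V F" and x: "x \<notin> V" and T: "T \<subseteq> V"
    and T_unlinked: "\<And>a b. a \<in> T \<Longrightarrow> b \<in> T \<Longrightarrow> reachable F a b \<Longrightarrow> a = b"
  shows "forest (insert x V) (F \<union> (\<lambda>t. {x, t}) ` T)" (is "forest ?V ?F")
proof -
  have old_edge: "{a, b} \<in> F" if "{a, b} \<in> ?F" "a \<noteq> x" "b \<noteq> x" for a b
    using that by (auto simp: doubleton_eq_iff)
  have new_edge: "a \<in> T" if "{x, a} \<in> ?F" "a \<noteq> x" for a
    using that F x by (auto simp: doubleton_eq_iff forest_def dest: graph_edge_subset)
  have "\<not> has_cycle ?V ?F"
  proof
    assume "has_cycle ?V ?F"
    then obtain xs where len: "length xs \<ge> 3" and dist: "distinct xs"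
      and walk: "walk_in ?F ?V xs" and closed: "{last xs, hd xs} \<in> ?F"
      unfolding has_cycle_def by blast
    show False
    proof (cases "x \<in> set xs")
      case False
      have "set xs \<subseteq> V"
        using walk False by (auto simp: walk_in_def)
      with len dist walk closed have "has_cycle V F"
        by (rule has_cycle_subgraph) (metis False old_edge)
      then show False
        using F by (simp add: forest_def)
    next
      case True
      with len dist walk closed obtain a ys where "ys \<noteq> []" and dist': "distinct (x # a # ys)"
        and "{x, a} \<in> ?F" and walk': "walk_in ?F ?V (a # ys)" and "{last ys, x} \<in> ?F"
        by (rule cycle_rotate_to_vertex)
      have "last ys \<in> set ys"
        using \<open>ys \<noteq> []\<close> by simp
      with dist' have x_notin: "x \<notin> set (a # ys)" and "a \<noteq> last ys"
        by auto
      have "a \<in> T"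
        using \<open>{x, a} \<in> ?F\<close> by (rule new_edge) (use x_notin in auto)
      moreover have "last ys \<in> T"
        using \<open>{last ys, x} \<in> ?F\<close> x_notin \<open>last ys \<in> set ys\<close>
        by (metis insert_commute list.set_intros(2) new_edge)
      moreover have "reachable F a (last ys)"
      proof -
        have "set (a # ys) \<subseteq> ?V"
          using walk' by (simp add: walk_in_def)
        with walk' have "walk_in F ?V (a # ys)"
          by (rule walk_in_subgraph) (metis x_notin old_edge)
        then show ?thesis
          using walk_in_reachable[of F ?V "a # ys"] \<open>ys \<noteq> []\<close> by simp
      qed
      ultimately have "a = last ys"
        by (rule T_unlinked)
      with \<open>a \<noteq> last ys\<close> show False ..
    qed
  qed
  then show ?thesis
    using graph_insert_vertex[OF _ x T] F by (simp add: forest_def)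
qed

section \<open>Adding a vertex to a suitable forest decomposition\<close>

locale decomposition_extension =
  fixes V :: "'a set" and E :: "'a set set" and x :: 'a
    and EF' :: "'a set set" and W' :: "'a \<Rightarrow> 'a set"
  assumes graph: "graph V E" and x_in_V: "x \<in> V"
    and dec: "suitable_forest_decomposition (V - {x}) (del_vertices_edges E {x}) EF' W'"
begin

definition nbrs :: "'a set" where
  "nbrs = {y \<in> V - {x}. {x, y} \<in> E}"

definition rep :: "'a \<Rightarrow> 'a" where
  "rep y = (SOME z. z \<in> nbrs \<and> reachable EF' y z)"

definition nbr_components :: "'a set" where
  "nbr_components = {v. \<exists>y\<in>nbrs. reachable EF' y v}"

definition ext_edges :: "'a set set" where
  "ext_edges = EF' \<union> (\<lambda>t. {x, t}) ` rep ` nbrs"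

definition ext_bags :: "'a \<Rightarrow> 'a set" where
  "ext_bags v = (if v = x then {x} else if v \<in> nbr_components then insert x (W' v) else W' v)"

lemma forest': "forest (V - {x}) EF'"
  and bags'_subset: "v \<in> V - {x} \<Longrightarrow> W' v \<subseteq> V - {x}"
  and bags'_connected: "u \<in> V - {x} \<Longrightarrow> induces_connected EF' {v \<in> V - {x}. u \<in> W' v}"
  and bags'_cover: "e \<in> del_vertices_edges E {x} \<Longrightarrow> \<exists>v\<in>V - {x}. e \<subseteq> W' v"
  and edges'_subset: "EF' \<subseteq> del_vertices_edges E {x}"
  and bags'_self: "v \<in> V - {x} \<Longrightarrow> v \<in> W' v"
  using dec by (auto simp: suitable_forest_decomposition_def forest_decomposition_def)

lemma rep_spec: "y \<in> nbrs \<Longrightarrow> rep y \<in> nbrs \<and> reachable EF' y (rep y)"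
  unfolding rep_def by (rule someI[of _ y]) simp

lemma rep_eq_if_reachable:
  assumes "reachable EF' y z"
  shows "rep y = rep z"
proof -
  have "reachable EF' y w \<longleftrightarrow> reachable EF' z w" for w
    using assms by (meson reachable_sym reachable_trans)
  then show ?thesis
    by (simp add: rep_def)
qed

lemma rep_rep: "y \<in> nbrs \<Longrightarrow> rep (rep y) = rep y"
  using rep_spec rep_eq_if_reachable by metis

lemma reps_unlinked:
  assumes "a \<in> rep ` nbrs" and "b \<in> rep ` nbrs" and "reachable EF' a b"
  shows "a = b"
proof -
  have "a = rep a" "b = rep b"
    using assms(1,2) rep_rep by auto
  with rep_eq_if_reachable[OF assms(3)] show ?thesis
    by simp
qed

lemma reps_subset: "rep ` nbrs \<subseteq> V - {x}"
  using rep_spec by (auto simp: nbrs_def)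

lemma forest_ext_edges: "forest V ext_edges"
proof -
  have "forest (insert x (V - {x})) ext_edges"
    unfolding ext_edges_def by (rule forest_insert_vertex[OF forest' _ reps_subset reps_unlinked]) simp
  then show ?thesis
    using x_in_V by (simp add: insert_absorb)
qed

lemma ext_edges_subset: "ext_edges \<subseteq> E"
  using edges'_subset rep_spec by (auto simp: ext_edges_def nbrs_def del_vertices_edges_def)

lemma nbrs_subset_nbr_components: "nbrs \<subseteq> nbr_components"
proof
  fix y assume "y \<in> nbrs"
  moreover have "reachable EF' y y"
    by simp
  ultimately show "y \<in> nbr_components"
    unfolding nbr_components_def by blast
qed

lemma nbr_components_subset: "nbr_components \<subseteq> V - {x}"
proof
  fix v assume "v \<in> nbr_components"
  then obtain y where "y \<in> nbrs" "reachable EF' y v"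
    by (auto simp: nbr_components_def)
  moreover have "graph (V - {x}) EF'"
    using forest' by (simp add: forest_def)
  ultimately show "v \<in> V - {x}"
    using reachable_in_graph by (force simp: nbrs_def)
qed

lemma ext_bags_subset: "v \<in> V \<Longrightarrow> ext_bags v \<subseteq> V"
  using bags'_subset x_in_V by (auto simp: ext_bags_def)

lemma ext_bags_self: "v \<in> V \<Longrightarrow> v \<in> ext_bags v"
  using bags'_self by (auto simp: ext_bags_def)

lemma card_ext_bags:
  assumes "v \<in> V - {x}"
  shows "card (ext_bags v) \<le> card (W' v) + 1"
proof -
  have "finite (W' v)"
    using bags'_subset[OF assms] graph_finite[OF graph] by (meson finite_Diff finite_subset)
  then show ?thesis
    by (simp add: ext_bags_def card_insert_if)
qed

lemma ext_bags_cover: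
  assumes "e \<in> E"
  shows "\<exists>v\<in>V. e \<subseteq> ext_bags v"
proof (cases "x \<in> e")
  case False
  then have "e \<in> del_vertices_edges E {x}"
    using assms by (simp add: del_vertices_edges_def)
  then obtain v where "v \<in> V - {x}" "e \<subseteq> W' v"
    using bags'_cover by blast
  moreover have "W' v \<subseteq> ext_bags v"
    using \<open>v \<in> V - {x}\<close> by (simp add: ext_bags_def subset_insertI)
  ultimately show ?thesis
    by blast
next
  case True
  obtain y where "y \<in> V" "y \<noteq> x" "e = {x, y}"
    using graph assms True by (rule graph_edge_at)
  then have "y \<in> nbr_components"
    using assms nbrs_subset_nbr_components by (auto simp: nbrs_def)
  then have "e \<subseteq> ext_bags y"
    using \<open>y \<in> V\<close> \<open>y \<noteq> x\<close> \<open>e = {x, y}\<close> bags'_self by (simp add: ext_bags_def)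
  with \<open>y \<in> V\<close> show ?thesis
    by blast
qed

lemma reachable_within_nbr_components:
  assumes "y \<in> nbrs" and "reachable EF' y v"
  shows "reachable {e \<in> ext_edges. e \<subseteq> insert x nbr_components} y v"
  using assms(2)
proof (induction rule: reachable_induct)
  case (step b d)
  have "reachable EF' y d"
    using step.hyps(1,2) by (rule reachable_edge_step)
  with step.hyps(1) assms(1) have "b \<in> nbr_components" "d \<in> nbr_components"
    by (auto simp: nbr_components_def)
  with step.hyps(2) have "{b, d} \<in> {e \<in> ext_edges. e \<subseteq> insert x nbr_components}"
    by (simp add: ext_edges_def)
  with step.IH show ?case
    by (rule reachable_edge_step)
qed simp

lemma x_bags_connected: "induces_connected ext_edges {v \<in> V. x \<in> ext_bags v}"
proof -
  let ?F = "{e \<in> ext_edges. e \<subseteq> insert x nbr_components}"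
  have bags: "{v \<in> V. x \<in> ext_bags v} = insert x nbr_components"
    using nbr_components_subset bags'_subset x_in_V by (auto simp: ext_bags_def)
  have "reachable ?F x v" if v: "v \<in> nbr_components" for v
  proof -
    obtain y where y: "y \<in> nbrs" "reachable EF' y v"
      using v by (auto simp: nbr_components_def)
    have "{x, rep y} \<in> ?F"
      using rep_spec[OF y(1)] y(1) nbrs_subset_nbr_components by (auto simp: ext_edges_def)
    then have "reachable ?F x (rep y)"
      by (rule reachable_edge_step[OF reachable_refl])
    moreover have "reachable ?F (rep y) y"
      using rep_spec[OF y(1)] by (auto intro: reachable_within_nbr_components reachable_sym)
    moreover have "reachable ?F y v"
      using y by (rule reachable_within_nbr_components)
    ultimately show ?thesis
      by (meson reachable_trans)
  qed
  then show ?thesis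
    unfolding bags by (intro induces_connectedI[of x]) auto
qed

lemma ext_bags_connected:
  assumes "u \<in> V"
  shows "induces_connected ext_edges {v \<in> V. u \<in> ext_bags v}"
proof (cases "u = x")
  case True
  then show ?thesis
    using x_bags_connected by simp
next
  case False
  then have "{v \<in> V. u \<in> ext_bags v} = {v \<in> V - {x}. u \<in> W' v}"
    by (auto simp: ext_bags_def)
  moreover have "EF' \<subseteq> ext_edges"
    by (simp add: ext_edges_def)
  ultimately show ?thesis
    using bags'_connected assms False by (metis Diff_iff induces_connected_mono singletonD)
qed

lemma suitable_ext: "suitable_forest_decomposition V E ext_edges ext_bags"
  unfolding suitable_forest_decomposition_def forest_decomposition_def
  by (intro conjI ballI forest_ext_edges ext_bags_subset ext_bags_connected ext_bags_cover
      ext_edges_subset ext_bags_self)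

end

lemma suitable_forest_decomposition_extend:
  assumes "graph V E" and "x \<in> V"
    and "suitable_forest_decomposition (V - {x}) (del_vertices_edges E {x}) EF' W'"
  obtains EF W where "suitable_forest_decomposition V E EF W" and "W x = {x}"
    and "\<forall>v\<in>V - {x}. card (W v) \<le> card (W' v) + 1"
proof -
  interpret decomposition_extension V E x EF' W'
    using assms by unfold_locales
  show thesis
    using card_ext_bags by (intro that[OF suitable_ext]) (simp_all add: ext_bags_def)
qed

lemma suitable_forest_decomposition_exists:
  assumes "graph V E"
  obtains EF W where "suitable_forest_decomposition V E EF W"
proof -
  have "finite V"
    using assms by (rule graph_finite)
  then have "\<exists>EF W. suitable_forest_decomposition V E EF W"
    using assms
  proof (induction V arbitrary: E rule: finite_induct)
    case empty
    then have "E = {}"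
      by (auto simp: graph_def)
    moreover have "forest {} {}"
      by (simp add: forest_def graph_def has_cycle_def walk_in_def)
    ultimately have "suitable_forest_decomposition {} E {} W" for W :: "'a \<Rightarrow> 'a set"
      by (simp add: suitable_forest_decomposition_def forest_decomposition_def)
    then show ?case
      by blast
  next
    case (insert x V)
    have "graph V (del_vertices_edges E {x})"
      using graph_del_vertices[OF insert.prems, of "{x}"] insert.hyps(2) by simp
    with insert.IH obtain EF' W' where
      "suitable_forest_decomposition V (del_vertices_edges E {x}) EF' W'"
      by blast
    then have "suitable_forest_decomposition (insert x V - {x}) (del_vertices_edges E {x}) EF' W'"
      using insert.hyps(2) by simp
    with insert.prems show ?case
      by (meson insertI1 suitable_forest_decomposition_extend)
  qed
  then show thesis
    using that by blast
qed

section \<open>Complexity\<close>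

lemma width_le_card:
  assumes "finite V" and "V \<noteq> {}" and "\<And>v. v \<in> V \<Longrightarrow> W v \<subseteq> V"
  shows "width V W \<le> card V"
proof -
  have "Max ((\<lambda>v. card (W v)) ` V) \<le> card V"
    using assms by (simp add: card_mono)
  then show ?thesis
    unfolding width_def by simp
qed

lemma finite_widths:
  assumes "graph V E" and "V \<noteq> {}"
  shows "finite {width V W | EF W. suitable_forest_decomposition V E EF W}"
proof (rule finite_subset)
  show "{width V W | EF W. suitable_forest_decomposition V E EF W} \<subseteq> {..card V}"
    using width_le_card[OF graph_finite[OF assms(1)] assms(2)]
    by (auto simp: suitable_forest_decomposition_def forest_decomposition_def)
qed simp

lemma cmp_le_width:
  assumes "graph V E" and "suitable_forest_decomposition V E EF W"
  shows "cmp V E \<le> width V W"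
proof (cases "V = {}")
  case False
  let ?Ws = "{width V W | EF W. suitable_forest_decomposition V E EF W}"
  have "width V W \<in> ?Ws"
    using assms(2) by blast
  with finite_widths[OF assms(1) False] have "Min ?Ws \<le> width V W"
    by (rule Min_le)
  with False show ?thesis
    by (simp add: cmp_def)
qed (simp add: cmp_def)

lemma cmp_attained:
  assumes "graph V E" and "V \<noteq> {}"
  obtains EF W where "suitable_forest_decomposition V E EF W" and "width V W = cmp V E"
proof -
  let ?Ws = "{width V W | EF W. suitable_forest_decomposition V E EF W}"
  have "?Ws \<noteq> {}"
    using suitable_forest_decomposition_exists[OF assms(1)] by blast
  with finite_widths[OF assms] have "Min ?Ws \<in> ?Ws"
    by (rule Min_in)
  then obtain EF W where "suitable_forest_decomposition V E EF W" and "width V W = Min ?Ws"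
    by auto
  moreover have "Min ?Ws = cmp V E"
    using assms(2) by (simp add: cmp_def)
  ultimately show thesis
    using that by simp
qed

lemma width_insert_le:
  assumes "finite V" and "V \<noteq> {}" and "card (W x) \<le> 1"
    and "\<And>v. v \<in> V \<Longrightarrow> card (W v) \<le> card (W' v) + 1"
  shows "width (insert x V) W \<le> width V W' + 1"
proof -
  define M where "M = Max ((\<lambda>v. card (W' v)) ` V)"
  have "card (W v) \<le> M + 1" if "v \<in> insert x V" for v
  proof (cases "v = x")
    case False
    then have "card (W' v) \<le> M"
      using that assms(1) by (simp add: M_def)
    with False that assms(4) show ?thesis
      by fastforce
  qed (use assms(3) in simp)
  then have "Max ((\<lambda>v. card (W v)) ` insert x V) \<le> M + 1"
    using assms(1) by simp
  then show ?thesis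
    unfolding width_def M_def by linarith
qed

lemma cmp_delete_vertex_le:
  assumes "graph V E" and "x \<in> V"
  shows "cmp V E \<le> cmp (V - {x}) (del_vertices_edges E {x}) + 1"
proof (cases "V - {x} = {}")
  case True
  obtain EF' W' where "suitable_forest_decomposition (V - {x}) (del_vertices_edges E {x}) EF' W'"
    using graph_del_vertices[OF assms(1)] by (rule suitable_forest_decomposition_exists)
  with assms obtain EF W where "suitable_forest_decomposition V E EF W" and "W x = {x}"
    by (rule suitable_forest_decomposition_extend)
  moreover have "V = {x}"
    using True assms(2) by blast
  ultimately have "cmp V E \<le> 0"
    using cmp_le_width[OF assms(1)] by (fastforce simp: width_def)
  then show ?thesis
    by simp
next
  case False
  obtain EF' W' where dec': "suitable_forest_decomposition (V - {x}) (del_vertices_edges E {x}) EF' W'"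
    and width': "width (V - {x}) W' = cmp (V - {x}) (del_vertices_edges E {x})"
    using graph_del_vertices[OF assms(1)] False by (rule cmp_attained)
  from assms dec' obtain EF W where dec: "suitable_forest_decomposition V E EF W" and "W x = {x}"
    and "\<forall>v\<in>V - {x}. card (W v) \<le> card (W' v) + 1"
    by (rule suitable_forest_decomposition_extend)
  then have "width (insert x (V - {x})) W \<le> width (V - {x}) W' + 1"
    using False graph_finite[OF assms(1)] by (intro width_insert_le) simp_all
  then show ?thesis
    using cmp_le_width[OF assms(1) dec] width' assms(2) by (simp add: insert_absorb)
qed

theorem lemma3p3:
  fixes V :: "'a set" and E :: "'a set set" and X :: "'a set"
  assumes "graph V E" and "X \<subseteq> V"
  shows "cmp V E \<le> cmp (V - X) (del_vertices_edges E X) + card X"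
proof -
  have "finite X"
    using assms(2) graph_finite[OF assms(1)] by (rule finite_subset)
  then show ?thesis
    using assms(2)
  proof (induction X rule: finite_induct)
    case empty
    then show ?case by simp
  next
    case (insert x X)
    then have "cmp V E \<le> cmp (V - X) (del_vertices_edges E X) + card X"
      by simp
    also have "\<dots> \<le> cmp (V - insert x X) (del_vertices_edges E (insert x X)) + 1 + card X"
      using cmp_delete_vertex_le[OF graph_del_vertices[OF assms(1)], of x X] insert.prems insert.hyps
      by (simp add: del_vertices_edges_twice flip: Diff_insert)
    finally show ?case
      using insert.hyps by simp
  qed
qed

end
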